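(* Let $\bar Q$ be a gentle bound quiver. Every face of the non-kissing complex $\mathcal K(\bar Q)$ has finite cardinality.
   Context: A gentle bound quiver is $\bar Q=(Q,I)$, $Q$ finite (paths composed left to right), $I$ admissible generated by length-two paths, each vertex with at most two incoming and two outgoing arrows, and for each arrow $\beta$ at most one $\alpha$ with $t(\alpha)=s(\beta),\alpha\beta\notin I$, at most one with $\alpha\beta\in I$, and dually at most one $\gamma$ with $s(\gamma)=t(\beta),\beta\gamma\notin I$ and at most one with $\beta\gamma\in I$. Strings: reduced words in arrows and formal inverse arrows, composable, with no factor $\pi^{\pm1}$ for a path $\pi\in I$, or length-zero words $\varepsilon_v$; identified with inverses. Blossoming quiver $\bar Q^\circledast$: add at each $v\in Q_0$ $2-\mathrm{indeg}(v)$ incoming and $2-\mathrm{outdeg}(v)$ outgoing arrows to new blossom vertices, with length-two relations at $v$ making it gentle. Walks: maximal strings of $\bar Q^\circledast$ (joining two blossom vertices), up to inversion. A substring of a walk is an occurrence of a factor (possibly a vertex) with all vertices in $Q_0$; top (bottom) if both adjacent arrows of the walk point away from (towards) it. $\omega$ kisses $\omega'$ if a string is a top substring of $\omega$ and a bottom substring of $\omega'$; self-kissing if it kisses itself. The non-kissing complex $\mathcal K(\bar Q)$ is the simplicial complex whose faces are the sets of pairwise non-kissing, non-self-kissing walks. *)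

theory Defs
  imports Main
begin

text \<open>A bound quiver: vertex set, arrow set, source and target maps and a set
of length-two relations (pairs (alpha, beta) standing for the path alpha beta,
paths composed left to right, so tgt alpha = src beta).\<close>

record ('v, 'a) bquiver =
  qverts :: "'v set"
  qarrs  :: "'a set"
  qsrc   :: "'a \<Rightarrow> 'v"
  qtgt   :: "'a \<Rightarrow> 'v"
  qrels  :: "('a \<times> 'a) set"

definition indeg :: "('v, 'a) bquiver \<Rightarrow> 'v \<Rightarrow> nat" where
  "indeg Q v = card {a \<in> qarrs Q. qtgt Q a = v}"

definition outdeg :: "('v, 'a) bquiver \<Rightarrow> 'v \<Rightarrow> nat" where
  "outdeg Q v = card {a \<in> qarrs Q. qsrc Q a = v}"

definition is_path :: "('v, 'a) bquiver \<Rightarrow> 'a list \<Rightarrow> bool" where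
  "is_path Q ps \<longleftrightarrow> set ps \<subseteq> qarrs Q \<and>
     (\<forall>i. Suc i < length ps \<longrightarrow> qtgt Q (ps ! i) = qsrc Q (ps ! Suc i))"

definition admissible :: "('v, 'a) bquiver \<Rightarrow> bool" where
  "admissible Q \<longleftrightarrow> (\<exists>N. \<forall>ps. is_path Q ps \<and> length ps = N \<longrightarrow>
      (\<exists>i. Suc i < length ps \<and> (ps ! i, ps ! Suc i) \<in> qrels Q))"

definition gentle :: "('v, 'a) bquiver \<Rightarrow> bool" where
  "gentle Q \<longleftrightarrow>
     finite (qverts Q) \<and> finite (qarrs Q) \<and>
     (\<forall>a \<in> qarrs Q. qsrc Q a \<in> qverts Q \<and> qtgt Q a \<in> qverts Q) \<and>
     qrels Q \<subseteq> {(a, b). a \<in> qarrs Q \<and> b \<in> qarrs Q \<and> qtgt Q a = qsrc Q b} \<and>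
     admissible Q \<and>
     (\<forall>v \<in> qverts Q. indeg Q v \<le> 2 \<and> outdeg Q v \<le> 2) \<and>
     (\<forall>b \<in> qarrs Q.
        card {a \<in> qarrs Q. qtgt Q a = qsrc Q b \<and> (a, b) \<notin> qrels Q} \<le> 1 \<and>
        card {a \<in> qarrs Q. qtgt Q a = qsrc Q b \<and> (a, b) \<in> qrels Q} \<le> 1 \<and>
        card {c \<in> qarrs Q. qsrc Q c = qtgt Q b \<and> (b, c) \<notin> qrels Q} \<le> 1 \<and>
        card {c \<in> qarrs Q. qsrc Q c = qtgt Q b \<and> (b, c) \<in> qrels Q} \<le> 1)"

definition blossoming :: "('v, 'a) bquiver \<Rightarrow> ('v, 'a) bquiver \<Rightarrow> bool" where
  "blossoming Q Qb \<longleftrightarrow>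
     qverts Q \<subseteq> qverts Qb \<and> qarrs Q \<subseteq> qarrs Qb \<and>
     (\<forall>a \<in> qarrs Q. qsrc Qb a = qsrc Q a \<and> qtgt Qb a = qtgt Q a) \<and>
     (\<forall>a \<in> qarrs Qb - qarrs Q.
        (qsrc Qb a \<in> qverts Q \<and> qtgt Qb a \<in> qverts Qb - qverts Q) \<or>
        (qtgt Qb a \<in> qverts Q \<and> qsrc Qb a \<in> qverts Qb - qverts Q)) \<and>
     (\<forall>b \<in> qverts Qb - qverts Q.
        card {a \<in> qarrs Qb. qsrc Qb a = b \<or> qtgt Qb a = b} = 1) \<and>
     (\<forall>v \<in> qverts Q. indeg Qb v = 2 \<and> outdeg Qb v = 2) \<and>
     qrels Qb \<inter> (qarrs Q \<times> qarrs Q) = qrels Q \<and>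
     gentle Qb"

datatype 'a letter = Fw 'a | Bw 'a

fun larr :: "'a letter \<Rightarrow> 'a" where
  "larr (Fw a) = a" | "larr (Bw a) = a"

fun linv :: "'a letter \<Rightarrow> 'a letter" where
  "linv (Fw a) = Bw a" | "linv (Bw a) = Fw a"

fun lsrc :: "('v, 'a) bquiver \<Rightarrow> 'a letter \<Rightarrow> 'v" where
  "lsrc Q (Fw a) = qsrc Q a" | "lsrc Q (Bw a) = qtgt Q a"

fun ltgt :: "('v, 'a) bquiver \<Rightarrow> 'a letter \<Rightarrow> 'v" where
  "ltgt Q (Fw a) = qtgt Q a" | "ltgt Q (Bw a) = qsrc Q a"

text \<open>A word is a start vertex together with a list of letters (arrows and
formal inverses). The empty list with start vertex v is the lazy string
epsilon_v.\<close>
type_synonym ('v, 'a) word = "'v \<times> 'a letter list"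

definition wverts :: "('v, 'a) bquiver \<Rightarrow> ('v, 'a) word \<Rightarrow> 'v list" where
  "wverts Q w = fst w # map (ltgt Q) (snd w)"

definition is_string :: "('v, 'a) bquiver \<Rightarrow> ('v, 'a) word \<Rightarrow> bool" where
  "is_string Q w \<longleftrightarrow>
     (let v = fst w; ls = snd w in
       v \<in> qverts Q \<and>
       (\<forall>x \<in> set ls. larr x \<in> qarrs Q) \<and>
       (\<forall>i < length ls. lsrc Q (ls ! i) = wverts Q w ! i) \<and>
       (\<forall>i. Suc i < length ls \<longrightarrow>
          ls ! Suc i \<noteq> linv (ls ! i) \<and>
          \<not> (\<exists>a b. ls ! i = Fw a \<and> ls ! Suc i = Fw b \<and> (a, b) \<in> qrels Q) \<and>
          \<not> (\<exists>a b. ls ! i = Bw b \<and> ls ! Suc i = Bw a \<and> (a, b) \<in> qrels Q)))"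

definition winv :: "('v, 'a) bquiver \<Rightarrow> ('v, 'a) word \<Rightarrow> ('v, 'a) word" where
  "winv Q w = (last (wverts Q w), rev (map linv (snd w)))"

definition occurs_at :: "('v, 'a) bquiver \<Rightarrow> ('v, 'a) word \<Rightarrow> ('v, 'a) word \<Rightarrow> nat \<Rightarrow> bool" where
  "occurs_at Q s w i \<longleftrightarrow>
     i + length (snd s) \<le> length (snd w) \<and>
     take (length (snd s)) (drop i (snd w)) = snd s \<and>
     wverts Q w ! i = fst s"

definition is_walk :: "('v, 'a) bquiver \<Rightarrow> ('v, 'a) word \<Rightarrow> bool" where
  "is_walk Qb w \<longleftrightarrow> is_string Qb w \<and>
     \<not> (\<exists>w' i. is_string Qb w' \<and> occurs_at Qb w w' i \<and> length (snd w) < length (snd w'))"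

definition walks :: "('v, 'a) bquiver \<Rightarrow> ('v, 'a) word set set" where
  "walks Qb = {{w, winv Qb w} | w. is_walk Qb w}"

text \<open>Substring of a walk w (in Qb): an occurrence of a factor all of whose
vertices lie in Q. Top: both adjacent arrows of the walk point away from it;
bottom: both point towards it.\<close>
definition substring_at :: "('v, 'a) bquiver \<Rightarrow> ('v, 'a) bquiver \<Rightarrow> ('v, 'a) word \<Rightarrow> ('v, 'a) word \<Rightarrow> nat \<Rightarrow> bool" where
  "substring_at Q Qb s w i \<longleftrightarrow> occurs_at Qb s w i \<and>
     (\<forall>j \<le> length (snd s). wverts Qb w ! (i + j) \<in> qverts Q)"

definition top_at :: "('v, 'a) bquiver \<Rightarrow> ('v, 'a) bquiver \<Rightarrow> ('v, 'a) word \<Rightarrow> ('v, 'a) word \<Rightarrow> nat \<Rightarrow> bool" where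
  "top_at Q Qb s w i \<longleftrightarrow> substring_at Q Qb s w i \<and>
     0 < i \<and> i + length (snd s) < length (snd w) \<and>
     (\<exists>a. snd w ! (i - 1) = Bw a) \<and> (\<exists>a. snd w ! (i + length (snd s)) = Fw a)"

definition bottom_at :: "('v, 'a) bquiver \<Rightarrow> ('v, 'a) bquiver \<Rightarrow> ('v, 'a) word \<Rightarrow> ('v, 'a) word \<Rightarrow> nat \<Rightarrow> bool" where
  "bottom_at Q Qb s w i \<longleftrightarrow> substring_at Q Qb s w i \<and>
     0 < i \<and> i + length (snd s) < length (snd w) \<and>
     (\<exists>a. snd w ! (i - 1) = Fw a) \<and> (\<exists>a. snd w ! (i + length (snd s)) = Bw a)"

definition kisses :: "('v, 'a) bquiver \<Rightarrow> ('v, 'a) bquiver \<Rightarrow> ('v, 'a) word set \<Rightarrow> ('v, 'a) word set \<Rightarrow> bool" where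
  "kisses Q Qb c c' \<longleftrightarrow>
     (\<exists>w \<in> c. \<exists>w' \<in> c'. \<exists>s i j. top_at Q Qb s w i \<and> bottom_at Q Qb s w' j)"

definition nk_faces :: "('v, 'a) bquiver \<Rightarrow> ('v, 'a) bquiver \<Rightarrow> ('v, 'a) word set set set" where
  "nk_faces Q Qb = {F. F \<subseteq> walks Qb \<and>
     (\<forall>c \<in> F. \<not> kisses Q Qb c c) \<and>
     (\<forall>c \<in> F. \<forall>c' \<in> F. \<not> kisses Q Qb c c')}"

end

(* Two distinct walks of a face with the same start separate at some letter, and by gentleness
   one of them leaves upwards and the other downwards.  Call such a position a branching point
   of a walk.  If two walks w1, w2 of the face enter their last branching points k1, k2 with the
   same letter, read them backwards from there: they cannot separate, since the stretch where they
   agree would be a top substring of a walk of the face following w1 past k1 and a bottom substring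
   of one following w2 past k2 (or vice versa).  Nor can one of them run out first, since a walk
   cannot be extended.  So w1 and w2 agree up to the branching point, and as they also agree on
   the letter there, the branching point was not the last one.  Hence a walk of the face is
   determined by its start and the two letters around its last branching point. *)

theory Submission
  imports Defs "HOL-Library.Sublist"
begin

definition composable :: "('v, 'a) bquiver \<Rightarrow> 'a letter \<Rightarrow> 'a letter \<Rightarrow> bool" where
  "composable G x y \<longleftrightarrow>
     larr x \<in> qarrs G \<and> larr y \<in> qarrs G \<and> ltgt G x = lsrc G y \<and> y \<noteq> linv x \<and>
     \<not> (\<exists>a b. x = Fw a \<and> y = Fw b \<and> (a, b) \<in> qrels G) \<and>
     \<not> (\<exists>a b. x = Bw b \<and> y = Bw a \<and> (a, b) \<in> qrels G)"

fun forward :: "'a letter \<Rightarrow> bool" where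
  "forward (Fw a) = True" | "forward (Bw a) = False"

lemma linv_linv [simp]: "linv (linv x) = x"
  by (cases x) auto

lemma forward_linv [simp]: "forward (linv x) \<longleftrightarrow> \<not> forward x"
  by (cases x) auto

lemma composable_linv: "composable G x y \<Longrightarrow> composable G (linv y) (linv x)"
  by (cases x; cases y) (auto simp: composable_def)

lemma card_le_2_eq:
  assumes "finite S" "card S \<le> 2" "a \<in> S" "b \<in> S" "c \<in> S" "b \<noteq> a" "c \<noteq> a"
  shows "b = c"
proof (rule ccontr)
  assume "b \<noteq> c"
  then have "card {a, b, c} = 3" using assms(6,7) by auto
  moreover have "card {a, b, c} \<le> card S" using assms(1-5) by (intro card_mono) auto
  ultimately show False using assms(2) by simp
qed

lemma gentle_composable_succ_unique:
  assumes G: "gentle G" and xy1: "composable G x y1" and xy2: "composable G x y2"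
    and "forward y1 = forward y2"
  shows "y1 = y2"
proof -
  have fin: "finite {c \<in> qarrs G. P c}" for P
    using G by (simp add: gentle_def)
  have ends: "qsrc G a \<in> qverts G" "qtgt G a \<in> qverts G" if "a \<in> qarrs G" for a
    using G that by (auto simp: gentle_def)
  have in2: "card {c \<in> qarrs G. qtgt G c = qtgt G a} \<le> 2"
    and out2: "card {c \<in> qarrs G. qsrc G c = qsrc G a} \<le> 2" if "a \<in> qarrs G" for a
    using G ends[OF that] by (auto simp: gentle_def indeg_def outdeg_def)
  have succ1: "card {c \<in> qarrs G. qsrc G c = qtgt G a \<and> (a, c) \<notin> qrels G} \<le> 1"
    and pred1: "card {c \<in> qarrs G. qtgt G c = qsrc G a \<and> (c, a) \<notin> qrels G} \<le> 1"
    if "a \<in> qarrs G" for a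
    using G that by (auto simp: gentle_def)
  show ?thesis
  proof (cases x)
    case (Fw a)
    then have a: "a \<in> qarrs G" using xy1 by (simp add: composable_def)
    show ?thesis
    proof (cases y1; cases y2)
      fix b1 b2 assume "y1 = Fw b1" "y2 = Fw b2"
      then show ?thesis
        using xy1 xy2 Fw card_le_Suc0_iff_eq[OF fin] succ1[OF a] by (auto simp: composable_def)
    next
      fix b1 b2 assume "y1 = Bw b1" "y2 = Bw b2"
      then show ?thesis
        using xy1 xy2 Fw card_le_2_eq[OF fin in2[OF a], of a b1 b2] a by (auto simp: composable_def)
    qed (use assms(4) in auto)
  next
    case (Bw a)
    then have a: "a \<in> qarrs G" using xy1 by (simp add: composable_def)
    show ?thesis
    proof (cases y1; cases y2)
      fix b1 b2 assume "y1 = Fw b1" "y2 = Fw b2"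
      then show ?thesis
        using xy1 xy2 Bw card_le_2_eq[OF fin out2[OF a], of a b1 b2] a by (auto simp: composable_def)
    next
      fix b1 b2 assume "y1 = Bw b1" "y2 = Bw b2"
      then show ?thesis
        using xy1 xy2 Bw card_le_Suc0_iff_eq[OF fin] pred1[OF a] by (auto simp: composable_def)
    qed (use assms(4) in auto)
  qed
qed

lemma gentle_composable_pred_unique:
  assumes "gentle G" "composable G x1 y" "composable G x2 y" "forward x1 = forward x2"
  shows "x1 = x2"
  using gentle_composable_succ_unique[OF assms(1) composable_linv composable_linv] assms(2-4)
  by (metis forward_linv linv_linv)

lemma gentle_letter_ends:
  "gentle G \<Longrightarrow> larr x \<in> qarrs G \<Longrightarrow> lsrc G x \<in> qverts G \<and> ltgt G x \<in> qverts G"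
  by (cases x) (auto simp: gentle_def)

lemma finite_letters:
  assumes "finite A"
  shows "finite {x. larr x \<in> A}"
proof (rule finite_subset)
  show "{x. larr x \<in> A} \<subseteq> Fw ` A \<union> Bw ` A"
  proof
    fix x assume "x \<in> {x. larr x \<in> A}"
    then show "x \<in> Fw ` A \<union> Bw ` A" by (cases x) auto
  qed
qed (use assms in simp)

lemma wverts_nth_0 [simp]: "wverts G w ! 0 = fst w"
  by (simp add: wverts_def)

lemma wverts_nth_Suc: "i < length (snd w) \<Longrightarrow> wverts G w ! Suc i = ltgt G (snd w ! i)"
  by (simp add: wverts_def)

lemma is_string_start: "is_string G w \<Longrightarrow> fst w \<in> qverts G"
  by (simp add: is_string_def Let_def)

lemma is_string_arr: "is_string G w \<Longrightarrow> i < length (snd w) \<Longrightarrow> larr (snd w ! i) \<in> qarrs G"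
  by (simp add: is_string_def Let_def)

lemma is_string_src:
  "is_string G w \<Longrightarrow> i < length (snd w) \<Longrightarrow> lsrc G (snd w ! i) = wverts G w ! i"
  by (simp add: is_string_def Let_def)

lemma is_string_composable:
  assumes "is_string G w" "Suc i < length (snd w)"
  shows "composable G (snd w ! i) (snd w ! Suc i)"
  using assms is_string_src[OF assms(1), of "Suc i"] wverts_nth_Suc[of i w G]
  unfolding composable_def is_string_def Let_def by auto

lemma is_string_Cons:
  assumes w: "is_string G w" "snd w \<noteq> []" and z: "composable G z (hd (snd w))"
    and "lsrc G z \<in> qverts G"
  shows "is_string G (lsrc G z, z # snd w)"
proof -
  have "fst w = ltgt G z"
    using z is_string_src[OF w(1), of 0] w(2) by (simp add: composable_def hd_conv_nth)
  then have verts: "wverts G (lsrc G z, z # snd w) = lsrc G z # wverts G w"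
    by (simp add: wverts_def)
  have "composable G z (snd w ! 0)" using z w(2) by (simp add: hd_conv_nth)
  then show ?thesis
    using assms(4) w(1) unfolding is_string_def Let_def verts
    by (auto simp: composable_def nth_Cons split: nat.splits)
qed

lemma nth_eq_if_take_eq: "take k xs = take k ys \<Longrightarrow> j < k \<Longrightarrow> xs ! j = ys ! j"
  by (metis nth_take)

lemma walk_prefix_eq:
  assumes w: "is_walk G w" and w': "is_string G w'" and start: "fst w' = fst w"
    and pre: "prefix (snd w) (snd w')"
  shows "w' = w"
proof -
  have "occurs_at G w w' 0"
    using start pre by (auto simp: occurs_at_def prefix_def)
  then have "\<not> length (snd w) < length (snd w')"
    using w w' unfolding is_walk_def by blast
  then have "snd w' = snd w"
    using pre prefix_length_less[of "snd w" "snd w'"] by (metis strict_prefix_def)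
  then show ?thesis using start by (simp add: prod_eq_iff)
qed

lemma walk_not_extendable:
  assumes G: "gentle G" and w: "is_walk G w" "snd w \<noteq> []"
    and z: "composable G z (hd (snd w))"
  shows False
proof -
  have s: "is_string G w" using w by (simp add: is_walk_def)
  let ?w' = "(lsrc G z, z # snd w)"
  have "is_string G ?w'"
    using is_string_Cons[OF s w(2) z] gentle_letter_ends[OF G] z by (simp add: composable_def)
  moreover have "fst w = ltgt G z"
    using z is_string_src[OF s, of 0] w(2) by (simp add: composable_def hd_conv_nth)
  then have "occurs_at G w ?w' 1"
    using wverts_nth_Suc[of 0 ?w' G] by (simp add: occurs_at_def)
  ultimately show False using w(1) unfolding is_walk_def by fastforce
qed

lemma walks_diverge:
  assumes w1: "is_walk G w1" and w2: "is_walk G w2" and "w1 \<noteq> w2" "fst w1 = fst w2"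
  obtains k where "k < length (snd w1)" "k < length (snd w2)"
    "take k (snd w1) = take k (snd w2)" "snd w1 ! k \<noteq> snd w2 ! k"
proof -
  have "\<not> prefix (snd w1) (snd w2)"
    using walk_prefix_eq[OF w1, of w2] w2 assms(3,4) by (auto simp: is_walk_def)
  moreover have "\<not> prefix (snd w2) (snd w1)"
    using walk_prefix_eq[OF w2, of w1] w1 assms(3,4) by (auto simp: is_walk_def)
  ultimately obtain ps y1 ys1 y2 ys2 where "y1 \<noteq> y2" "snd w1 = ps @ y1 # ys1" "snd w2 = ps @ y2 # ys2"
    using parallel_decomp[of "snd w1" "snd w2"] by (auto simp: parallel_def)
  then show ?thesis by (intro that[of "length ps"]) auto
qed

lemma walk_initial_factor_not_interior:
  assumes G: "gentle G" and w1: "is_walk G w1" and w2: "is_string G w2"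
    and k1: "0 < k1" "k1 \<le> length (snd w1)" and k2: "k1 < k2" "k2 \<le> length (snd w2)"
    and agree: "\<forall>j<k1. snd w1 ! (k1 - Suc j) = snd w2 ! (k2 - Suc j)"
  shows False
proof -
  have ne: "snd w1 \<noteq> []" using k1 by auto
  then have "hd (snd w1) = snd w2 ! (k2 - k1)"
    using agree[rule_format, of "k1 - 1"] k1 by (simp add: hd_conv_nth)
  also have "k2 - k1 = Suc (k2 - k1 - 1)" using k2 by simp
  finally have "hd (snd w1) = snd w2 ! Suc (k2 - k1 - 1)" .
  moreover have "composable G (snd w2 ! (k2 - k1 - 1)) (snd w2 ! Suc (k2 - k1 - 1))"
    using is_string_composable[OF w2, of "k2 - k1 - 1"] k1 k2 by simp
  ultimately show False using walk_not_extendable[OF G w1 ne] by simp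
qed

text \<open>A blossom vertex has a single incident arrow, so a string could pass through it only by
  backtracking along that arrow.\<close>

lemma blossoming_string_interior:
  assumes Q: "gentle Q" and bl: "blossoming Q Qb" and w: "is_string Qb w"
    and i: "0 < i" "i < length (snd w)"
  shows "wverts Qb w ! i \<in> qverts Q"
proof (rule ccontr)
  define u where "u = wverts Qb w ! i"
  define x where "x = snd w ! (i - 1)"
  define y where "y = snd w ! i"
  assume "wverts Qb w ! i \<notin> qverts Q"
  then have u: "u \<notin> qverts Q" by (simp add: u_def)
  have xy: "composable Qb x y"
    using is_string_composable[OF w, of "i - 1"] i by (simp add: x_def y_def)
  have ux: "ltgt Qb x = u"
    using wverts_nth_Suc[of "i - 1" w Qb] i by (simp add: x_def u_def)
  have uy: "lsrc Qb y = u"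
    using is_string_src[OF w i(2)] by (simp add: y_def u_def)
  have old: "qsrc Qb a \<in> qverts Q \<and> qtgt Qb a \<in> qverts Q" if "a \<in> qarrs Q" for a
    using Q bl that by (auto simp: gentle_def blossoming_def)
  have x_new: "larr x \<notin> qarrs Q"
    using old[of "larr x"] ux u by (cases x) auto
  have x_arr: "larr x \<in> qarrs Qb" and y_arr: "larr y \<in> qarrs Qb"
    using xy by (simp_all add: composable_def)
  have "u \<in> qverts Qb"
    using gentle_letter_ends[OF _ x_arr] bl ux by (simp add: blossoming_def)
  then have one: "card {a \<in> qarrs Qb. qsrc Qb a = u \<or> qtgt Qb a = u} = 1"
    using bl u by (simp add: blossoming_def)
  have "larr x \<in> {a \<in> qarrs Qb. qsrc Qb a = u \<or> qtgt Qb a = u}"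
    using x_arr ux by (cases x) auto
  moreover have "larr y \<in> {a \<in> qarrs Qb. qsrc Qb a = u \<or> qtgt Qb a = u}"
    using y_arr uy by (cases y) auto
  ultimately have same: "larr x = larr y"
    using one by (metis (no_types, lifting) card_1_singletonE singletonD)
  have "(qsrc Qb (larr x) \<in> qverts Q) \<noteq> (qtgt Qb (larr x) \<in> qverts Q)"
    using bl x_arr x_new unfolding blossoming_def by blast
  then have loopfree: "qsrc Qb (larr x) \<noteq> qtgt Qb (larr x)" by metis
  show False
  proof (cases x; cases y)
    fix a b assume "x = Fw a" "y = Fw b"
    then show False using same loopfree ux uy by simp
  next
    fix a b assume "x = Bw a" "y = Bw b"
    then show False using same loopfree ux uy by simp
  next
    fix a b assume "x = Fw a" "y = Bw b"
    then show False using same xy by (simp add: composable_def)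
  next
    fix a b assume "x = Bw a" "y = Fw b"
    then show False using same xy by (simp add: composable_def)
  qed
qed

definition factor :: "('v, 'a) bquiver \<Rightarrow> ('v, 'a) word \<Rightarrow> nat \<Rightarrow> nat \<Rightarrow> ('v, 'a) word" where
  "factor G w i m = (wverts G w ! i, take m (drop i (snd w)))"

lemma blossoming_factor_substring:
  assumes "gentle Q" "blossoming Q Qb" "is_string Qb w" "0 < i" "i + m < length (snd w)"
  shows "substring_at Q Qb (factor Qb w i m) w i"
  using assms blossoming_string_interior[OF assms(1-3)]
  by (auto simp: substring_at_def occurs_at_def factor_def)

lemma blossoming_factor_top:
  assumes "gentle Q" "blossoming Q Qb" "is_string Qb w" "0 < i" "i + m < length (snd w)"
    and "\<not> forward (snd w ! (i - 1))" "forward (snd w ! (i + m))"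
  shows "top_at Q Qb (factor Qb w i m) w i"
  using blossoming_factor_substring[OF assms(1-5)] assms(4-7)
  by (auto simp: top_at_def factor_def elim: forward.elims)

lemma blossoming_factor_bottom:
  assumes "gentle Q" "blossoming Q Qb" "is_string Qb w" "0 < i" "i + m < length (snd w)"
    and "forward (snd w ! (i - 1))" "\<not> forward (snd w ! (i + m))"
  shows "bottom_at Q Qb (factor Qb w i m) w i"
  using blossoming_factor_substring[OF assms(1-5)] assms(4-7)
  by (auto simp: bottom_at_def factor_def elim: forward.elims)

locale nk_face =
  fixes Q Qb :: "('v, 'a) bquiver" and F :: "('v, 'a) word set set"
  assumes gentle_Q: "gentle Q" and blossoming: "blossoming Q Qb" and face: "F \<in> nk_faces Q Qb"
begin

lemma gentle_Qb: "gentle Qb"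
  using blossoming by (simp add: blossoming_def)

definition face_walks :: "('v, 'a) word set" where
  "face_walks = {w. is_walk Qb w \<and> (\<exists>c \<in> F. w \<in> c)}"

lemma face_walks_walk: "w \<in> face_walks \<Longrightarrow> is_walk Qb w"
  by (simp add: face_walks_def)

lemma face_walks_string: "w \<in> face_walks \<Longrightarrow> is_string Qb w"
  by (simp add: face_walks_def is_walk_def)

lemma face_walks_no_kiss:
  assumes "a \<in> face_walks" "b \<in> face_walks" "top_at Q Qb s a i" "bottom_at Q Qb s b j"
  shows False
proof -
  obtain ca cb where "ca \<in> F" "a \<in> ca" "cb \<in> F" "b \<in> cb"
    using assms(1,2) by (auto simp: face_walks_def)
  then have "kisses Q Qb ca cb" using assms(3,4) unfolding kisses_def by blast
  with \<open>ca \<in> F\<close> \<open>cb \<in> F\<close> show False using face by (auto simp: nk_faces_def)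
qed

lemma face_walks_no_top_bottom_factor:
  assumes a: "a \<in> face_walks" and b: "b \<in> face_walks" and m: "0 < m"
    and i: "0 < i" "i + m < length (snd a)" and j: "0 < j" "j + m < length (snd b)"
    and same: "\<forall>l<m. snd a ! (i + l) = snd b ! (j + l)"
    and "\<not> forward (snd a ! (i - 1))" "forward (snd a ! (i + m))"
    and "forward (snd b ! (j - 1))" "\<not> forward (snd b ! (j + m))"
  shows False
proof -
  have "factor Qb a i m = factor Qb b j m"
  proof -
    have "wverts Qb a ! i = wverts Qb b ! j"
      using is_string_src[OF face_walks_string[OF a], of i]
        is_string_src[OF face_walks_string[OF b], of j] same[rule_format, of 0] m i j
      by simp
    moreover have "take m (drop i (snd a)) = take m (drop j (snd b))"
      by (rule nth_equalityI) (use i j same in auto)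
    ultimately show ?thesis by (simp add: factor_def)
  qed
  then show False
    using face_walks_no_kiss[OF a b] assms(9-)
      blossoming_factor_top[OF gentle_Q blossoming face_walks_string[OF a] i]
      blossoming_factor_bottom[OF gentle_Q blossoming face_walks_string[OF b] j]
    by metis
qed

definition branches_at :: "('v, 'a) word \<Rightarrow> nat \<Rightarrow> bool" where
  "branches_at w k \<longleftrightarrow> (\<exists>w' \<in> face_walks. fst w' = fst w \<and>
     k < length (snd w) \<and> k < length (snd w') \<and>
     take k (snd w') = take k (snd w) \<and> snd w' ! k \<noteq> snd w ! k)"

lemma branches_at_length: "branches_at w k \<Longrightarrow> k < length (snd w)"
  by (auto simp: branches_at_def)

lemma face_walks_branch_after:
  assumes w1: "w1 \<in> face_walks" and w2: "w2 \<in> face_walks" and "w1 \<noteq> w2" "fst w1 = fst w2"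
    and common: "take k0 (snd w1) = take k0 (snd w2)"
  obtains k where "k0 \<le> k" "branches_at w1 k"
proof -
  obtain k where k: "k < length (snd w1)" "k < length (snd w2)"
    "take k (snd w1) = take k (snd w2)" "snd w1 ! k \<noteq> snd w2 ! k"
    using walks_diverge[OF face_walks_walk[OF w1] face_walks_walk[OF w2] assms(3,4)] .
  have "k0 \<le> k"
    using nth_eq_if_take_eq[OF common, of k] k(4) by (meson not_le)
  moreover have "branches_at w1 k"
    unfolding branches_at_def using w2 assms(4) k by (intro bexI[of _ w2]) auto
  ultimately show thesis by (rule that)
qed

lemma branches_at_orientations:
  assumes w: "w \<in> face_walks" and br: "branches_at w k" and k: "0 < k"
  obtains a b where "a \<in> face_walks" "b \<in> face_walks" "k < length (snd a)" "k < length (snd b)"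
    "take k (snd a) = take k (snd w)" "take k (snd b) = take k (snd w)"
    "forward (snd a ! k)" "\<not> forward (snd b ! k)"
proof -
  obtain w' where w': "w' \<in> face_walks" "k < length (snd w)" "k < length (snd w')"
    "take k (snd w') = take k (snd w)" "snd w' ! k \<noteq> snd w ! k"
    using br by (auto simp: branches_at_def)
  have "snd w' ! (k - 1) = snd w ! (k - 1)"
    using nth_eq_if_take_eq[OF w'(4)] k by simp
  then have c': "composable Qb (snd w ! (k - 1)) (snd w' ! k)"
    and c: "composable Qb (snd w ! (k - 1)) (snd w ! k)"
    using is_string_composable[OF face_walks_string[OF w'(1)], of "k - 1"]
      is_string_composable[OF face_walks_string[OF w], of "k - 1"] k w'(2,3) by simp_all
  have orient: "forward (snd w' ! k) \<noteq> forward (snd w ! k)"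
    using gentle_composable_succ_unique[OF gentle_Qb c' c] w'(5) by blast
  show thesis
  proof (cases "forward (snd w ! k)")
    case True
    then show thesis using that[of w w'] w w'(1-4) orient by simp
  next
    case False
    then show thesis using that[of w' w] w w'(1-4) orient by simp
  qed
qed

lemma branches_no_opposite_predecessors:
  assumes w1: "w1 \<in> face_walks" "branches_at w1 k1" and w2: "w2 \<in> face_walks" "branches_at w2 k2"
    and m: "0 < m" "m < k1" "m < k2"
    and agree: "\<forall>j<m. snd w1 ! (k1 - Suc j) = snd w2 ! (k2 - Suc j)"
    and back1: "\<not> forward (snd w1 ! (k1 - Suc m))" and fw2: "forward (snd w2 ! (k2 - Suc m))"
  shows False
proof -
  \<comment> \<open>The stretch before the branching points is top in a walk going up at k1 and bottom in
    a walk going down at k2.\<close>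
  have k: "0 < k1" "0 < k2" using m by simp_all
  obtain a where a: "a \<in> face_walks" "k1 < length (snd a)" "take k1 (snd a) = take k1 (snd w1)"
    "forward (snd a ! k1)"
    using branches_at_orientations[OF w1 k(1)] by blast
  obtain b where b: "b \<in> face_walks" "k2 < length (snd b)" "take k2 (snd b) = take k2 (snd w2)"
    "\<not> forward (snd b ! k2)"
    using branches_at_orientations[OF w2 k(2)] by blast
  have a_nth: "snd a ! l = snd w1 ! l" if "l < k1" for l using nth_eq_if_take_eq[OF a(3) that] .
  have b_nth: "snd b ! l = snd w2 ! l" if "l < k2" for l using nth_eq_if_take_eq[OF b(3) that] .
  have same: "\<forall>l<m. snd a ! (k1 - m + l) = snd b ! (k2 - m + l)"
  proof (intro allI impI)
    fix l assume l: "l < m"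
    have "k1 - m + l = k1 - Suc (m - Suc l)" "k2 - m + l = k2 - Suc (m - Suc l)"
      using l m by auto
    then show "snd a ! (k1 - m + l) = snd b ! (k2 - m + l)"
      using agree[rule_format, of "m - Suc l"] a_nth[of "k1 - m + l"] b_nth[of "k2 - m + l"] l m
      by simp
  qed
  have i: "0 < k1 - m" "k1 - m + m < length (snd a)" and j: "0 < k2 - m" "k2 - m + m < length (snd b)"
    using a(2) b(2) m by simp_all
  have "\<not> forward (snd a ! (k1 - m - 1))"
    using a_nth[of "k1 - Suc m"] back1 m by simp
  moreover have "forward (snd a ! (k1 - m + m))"
    using a(4) m by simp
  moreover have "forward (snd b ! (k2 - m - 1))"
    using b_nth[of "k2 - Suc m"] fw2 m by simp
  moreover have "\<not> forward (snd b ! (k2 - m + m))"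
    using b(4) m by simp
  ultimately show False
    by (rule face_walks_no_top_bottom_factor[OF a(1) b(1) m(1) i j same])
qed

lemma branches_back_agreement_step:
  assumes w1: "w1 \<in> face_walks" "branches_at w1 k1" and w2: "w2 \<in> face_walks" "branches_at w2 k2"
    and m: "0 < m" "m < k1" "m < k2"
    and agree: "\<forall>j<m. snd w1 ! (k1 - Suc j) = snd w2 ! (k2 - Suc j)"
  shows "snd w1 ! (k1 - Suc m) = snd w2 ! (k2 - Suc m)"
proof (rule ccontr)
  assume ne: "snd w1 ! (k1 - Suc m) \<noteq> snd w2 ! (k2 - Suc m)"
  have "snd w1 ! Suc (k1 - Suc m) = snd w2 ! Suc (k2 - Suc m)"
    using agree[rule_format, of "m - 1"] m by (simp add: Suc_diff_Suc)
  moreover have "composable Qb (snd w1 ! (k1 - Suc m)) (snd w1 ! Suc (k1 - Suc m))"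
    and "composable Qb (snd w2 ! (k2 - Suc m)) (snd w2 ! Suc (k2 - Suc m))"
    using is_string_composable[OF face_walks_string[OF w1(1)], of "k1 - Suc m"]
      is_string_composable[OF face_walks_string[OF w2(1)], of "k2 - Suc m"]
      branches_at_length[OF w1(2)] branches_at_length[OF w2(2)] m by simp_all
  ultimately have "forward (snd w1 ! (k1 - Suc m)) \<noteq> forward (snd w2 ! (k2 - Suc m))"
    using gentle_composable_pred_unique[OF gentle_Qb] ne by metis
  moreover have "\<forall>j<m. snd w2 ! (k2 - Suc j) = snd w1 ! (k1 - Suc j)"
    using agree by simp
  ultimately show False
    using branches_no_opposite_predecessors[OF w1 w2 m agree]
      branches_no_opposite_predecessors[OF w2 w1 m(1,3,2)] by blast
qed

lemma branches_back_agreement: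
  assumes w1: "w1 \<in> face_walks" "branches_at w1 k1" and w2: "w2 \<in> face_walks" "branches_at w2 k2"
    and k: "0 < k1" "0 < k2" and last: "snd w1 ! (k1 - 1) = snd w2 ! (k2 - 1)"
  shows "\<forall>j<min k1 k2. snd w1 ! (k1 - Suc j) = snd w2 ! (k2 - Suc j)"
proof -
  have "\<forall>j<m. snd w1 ! (k1 - Suc j) = snd w2 ! (k2 - Suc j)" if "m \<le> min k1 k2" for m
    using that
  proof (induction m)
    case (Suc m)
    then have "snd w1 ! (k1 - Suc m) = snd w2 ! (k2 - Suc m)"
      using branches_back_agreement_step[OF w1 w2, of m] last by (cases "m = 0") auto
    then show ?case using Suc by (auto simp: less_Suc_eq)
  qed simp
  from this[of "min k1 k2"] show ?thesis by simp
qed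

lemma branches_same_prefix:
  assumes w1: "w1 \<in> face_walks" "branches_at w1 k1" and w2: "w2 \<in> face_walks" "branches_at w2 k2"
    and k: "0 < k1" "0 < k2" and last: "snd w1 ! (k1 - 1) = snd w2 ! (k2 - 1)"
  shows "k1 = k2" "fst w1 = fst w2" "take k1 (snd w1) = take k2 (snd w2)"
proof -
  have agree: "\<forall>j<min k1 k2. snd w1 ! (k1 - Suc j) = snd w2 ! (k2 - Suc j)"
    using branches_back_agreement[OF w1 w2 k last] .
  have len: "k1 < length (snd w1)" "k2 < length (snd w2)"
    using branches_at_length w1(2) w2(2) by auto
  show "k1 = k2"
  proof (rule ccontr)
    assume "k1 \<noteq> k2"
    then consider "k1 < k2" | "k2 < k1" by linarith
    then show False
    proof cases
      case 1
      then show False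
        using walk_initial_factor_not_interior[OF gentle_Qb face_walks_walk[OF w1(1)]
            face_walks_string[OF w2(1)] k(1) _ 1] agree len by simp
    next
      case 2
      then show False
        using walk_initial_factor_not_interior[OF gentle_Qb face_walks_walk[OF w2(1)]
            face_walks_string[OF w1(1)] k(2) _ 2] agree len by simp
    qed
  qed
  then have agree': "\<forall>j<k1. snd w1 ! (k1 - Suc j) = snd w2 ! (k1 - Suc j)"
    using agree by simp
  show "take k1 (snd w1) = take k2 (snd w2)"
  proof (rule nth_equalityI)
    fix l assume "l < length (take k1 (snd w1))"
    then show "take k1 (snd w1) ! l = take k2 (snd w2) ! l"
      using agree'[rule_format, of "k1 - Suc l"] \<open>k1 = k2\<close> len by simp
  qed (use \<open>k1 = k2\<close> len in simp)
  have "snd w1 ! 0 = snd w2 ! 0"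
    using agree'[rule_format, of "k1 - 1"] k by simp
  moreover have "snd w1 \<noteq> []" "snd w2 \<noteq> []" using len by auto
  ultimately show "fst w1 = fst w2"
    using is_string_src[OF face_walks_string[OF w1(1)], of 0]
      is_string_src[OF face_walks_string[OF w2(1)], of 0] len by simp
qed

definition last_branch :: "('v, 'a) word \<Rightarrow> nat" where
  "last_branch w = Max {k. branches_at w k}"

lemma last_branch:
  assumes "branches_at w k"
  shows "branches_at w (last_branch w)" "k \<le> last_branch w"
proof -
  have "finite {k. branches_at w k}"
    by (rule finite_subset[of _ "{..<length (snd w)}"]) (auto dest: branches_at_length)
  then show "branches_at w (last_branch w)" "k \<le> last_branch w"
    using assms Max_in[of "{k. branches_at w k}"] Max_ge[of "{k. branches_at w k}" k]
    unfolding last_branch_def by auto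
qed

definition branch_key :: "('v, 'a) word \<Rightarrow> 'v \<times> ('a letter option \<times> 'a letter) option" where
  "branch_key w = (fst w,
     if \<exists>k. branches_at w k
     then Some (if last_branch w = 0 then None else Some (snd w ! (last_branch w - 1)),
                snd w ! last_branch w)
     else None)"

lemma branch_key_inj: "inj_on branch_key face_walks"
proof (rule inj_onI, rule ccontr)
  fix w1 w2
  assume w1: "w1 \<in> face_walks" and w2: "w2 \<in> face_walks" and ne: "w1 \<noteq> w2"
    and key: "branch_key w1 = branch_key w2"
  have start: "fst w1 = fst w2" using key by (simp add: branch_key_def)
  have nil: "take 0 (snd w1) = take 0 (snd w2)" by simp
  obtain k where "branches_at w1 k"
    using face_walks_branch_after[OF w1 w2 ne start nil] by blast
  then have ex1: "\<exists>k. branches_at w1 k" and b1: "branches_at w1 (last_branch w1)"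
    and max1: "\<And>k. branches_at w1 k \<Longrightarrow> k \<le> last_branch w1"
    using last_branch by blast+
  obtain k' where "branches_at w2 k'"
    using face_walks_branch_after[OF w2 w1 ne[symmetric] start[symmetric] nil[symmetric]] by blast
  then have ex2: "\<exists>k. branches_at w2 k" and b2: "branches_at w2 (last_branch w2)"
    using last_branch by blast+
  define k1 where "k1 = last_branch w1"
  define k2 where "k2 = last_branch w2"
  have "(fst w1, Some (if k1 = 0 then None else Some (snd w1 ! (k1 - 1)), snd w1 ! k1)) =
      (fst w2, Some (if k2 = 0 then None else Some (snd w2 ! (k2 - 1)), snd w2 ! k2))"
    using key by (simp only: branch_key_def if_P[OF ex1] if_P[OF ex2] k1_def k2_def)
  then have prev: "(if k1 = 0 then None else Some (snd w1 ! (k1 - 1))) =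
      (if k2 = 0 then None else Some (snd w2 ! (k2 - 1)))" and cur: "snd w1 ! k1 = snd w2 ! k2"
    by (simp_all only: prod.inject option.inject)
  have "k1 = k2 \<and> take k1 (snd w1) = take k2 (snd w2)"
  proof (cases "k1 = 0")
    case False
    then have "k2 \<noteq> 0" "snd w1 ! (k1 - 1) = snd w2 ! (k2 - 1)" using prev by (auto split: if_splits)
    then show ?thesis
      using branches_same_prefix[OF w1 b1 w2 b2] False unfolding k1_def k2_def by simp
  qed (use prev in \<open>auto split: if_splits\<close>)
  then have "take (Suc k1) (snd w1) = take (Suc k1) (snd w2)"
    using cur branches_at_length[OF b1] branches_at_length[OF b2] unfolding k1_def k2_def
    by (metis take_Suc_conv_app_nth)
  then obtain k where "Suc k1 \<le> k" "branches_at w1 k"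
    using face_walks_branch_after[OF w1 w2 ne start] by blast
  then show False using max1 unfolding k1_def by fastforce
qed

lemma finite_face_walks: "finite face_walks"
proof (rule inj_on_finite[OF branch_key_inj])
  let ?L = "{x. larr x \<in> qarrs Qb}"
  let ?K = "qverts Qb \<times> insert None (Some ` (insert None (Some ` ?L) \<times> ?L))"
  show "branch_key ` face_walks \<subseteq> ?K"
  proof (rule image_subsetI)
    fix w assume w: "w \<in> face_walks"
    have letter: "snd w ! k \<in> ?L" if "k < length (snd w)" for k
      using is_string_arr[OF face_walks_string[OF w] that] by simp
    have "snd w ! last_branch w \<in> ?L" "snd w ! (last_branch w - 1) \<in> ?L"
      if "branches_at w k" for k
      using letter branches_at_length last_branch(1)[OF that] by (simp_all add: less_imp_diff_less)
    then show "branch_key w \<in> ?K"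
      using is_string_start[OF face_walks_string[OF w]] unfolding branch_key_def by auto
  qed
  show "finite ?K"
    using gentle_Qb finite_letters[of "qarrs Qb"] by (simp add: gentle_def)
qed

lemma finite_face: "finite F"
proof (rule finite_surj[OF finite_face_walks])
  show "F \<subseteq> (\<lambda>w. {w, winv Qb w}) ` face_walks"
  proof
    fix c assume c: "c \<in> F"
    then obtain w where cw: "c = {w, winv Qb w}" and "is_walk Qb w"
      using face by (auto simp: nk_faces_def walks_def)
    then have "w \<in> face_walks" using c by (auto simp: face_walks_def)
    then show "c \<in> (\<lambda>w. {w, winv Qb w}) ` face_walks" using cw by blast
  qed
qed

end

theorem proposition4p15:
  fixes Q Qb :: "('v, 'a) bquiver" and F :: "('v, 'a) word set set"
  assumes "gentle Q"
    and "blossoming Q Qb"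
    and "F \<in> nk_faces Q Qb"
  shows "finite F"
proof -
  interpret nk_face Q Qb F using assms by unfold_locales
  show ?thesis by (rule finite_face)
qed

end
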